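(* Let $\mathcal{F}_{-\frac12}=C^\infty_{\mathbb{C}}(S^{1|1})$ with even part $(\mathcal{F}_{-\frac12})_0=\{f_0(x)\}$ and odd part $(\mathcal{F}_{-\frac12})_1=\{\xi f_1(x)\}$, equipped with the operation (defined for pure-parity $f,g$ and extended bilinearly) $$(f,g)=-\tfrac12\,\overline{D}(f)\,g+\tfrac12\,(-1)^{\sigma(f)}\,f\,\overline{D}(g).$$ Then: (1) $(\mathcal{F}_{-\frac12})_1$ is closed under $(\,,\,)$ and is a commutative associative algebra; (2) setting $\rho_\psi v:=(\psi,v)$ for $\psi\in(\mathcal{F}_{-\frac12})_1$, $v\in(\mathcal{F}_{-\frac12})_0$, one has $\rho_\psi v\in(\mathcal{F}_{-\frac12})_0$ and $\rho_\varphi\circ\rho_\psi+\rho_\psi\circ\rho_\varphi=\rho_{(\varphi,\psi)}$ for all $\varphi,\psi\in(\mathcal{F}_{-\frac12})_1$; (3) the map $(\,,\,):(\mathcal{F}_{-\frac12})_0\otimes(\mathcal{F}_{-\frac12})_0\to(\mathcal{F}_{-\frac12})_1$ is antisymmetric and satisfies $\rho_\psi(v,w)=(\rho_\psi v,w)+(v,\rho_\psi w)$ for all $\psi\in(\mathcal{F}_{-\frac12})_1$, $v,w\in(\mathcal{F}_{-\frac12})_0$; (4) $(u,(v,w))+(v,(w,u))+(w,(u,v))=0$ for all $u,v,w\in(\mathcal{F}_{-\frac12})_0$.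
   Context: The supercircle $S^{1|1}$ has superalgebra of functions $C^\infty_{\mathbb{C}}(S^1)[\xi]$: elements $f=f_0(x)+\xi f_1(x)$ with $f_0,f_1$ smooth complex functions on $S^1$, $\xi$ odd with $\xi^2=0$, $x\xi=\xi x$. Parity: $\sigma(f_0)=0$, $\sigma(\xi f_1)=1$. $\partial_x$ acts coefficientwise, $\partial_\xi f=f_1$, and $\overline{D}=\partial_\xi-\xi\,\partial_x$. The operation above is the order-$\frac12$ supertransvectant $(f,g)=\mu\,\overline{D}(f)g-(-1)^{\sigma(f)}\lambda f\overline{D}(g)$ with $\lambda=\mu=-\frac12$. *)

theory Defs
  imports "HOL-Analysis.Analysis"
begin

text \<open>Functions on the circle S^1 = R / 2 pi Z are modelled as 2 pi-periodic
  smooth functions real => complex.  A superfunction f = f0(x) + xi f1(x) on S^{1|1}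
  is modelled as the pair (f0, f1).\<close>

type_synonym sfun = "(real \<Rightarrow> complex) \<times> (real \<Rightarrow> complex)"

definition vderiv :: "(real \<Rightarrow> complex) \<Rightarrow> real \<Rightarrow> complex" where
  "vderiv f = (\<lambda>x. vector_derivative f (at x))"

definition smooth_fun :: "(real \<Rightarrow> complex) \<Rightarrow> bool" where
  "smooth_fun f \<longleftrightarrow> (\<forall>n x. ((vderiv ^^ n) f) differentiable (at x))"

definition circle_fun :: "(real \<Rightarrow> complex) \<Rightarrow> bool" where
  "circle_fun f \<longleftrightarrow> smooth_fun f \<and> (\<forall>x. f (x + 2 * pi) = f x)"

definition F :: "sfun set" where
  "F = {(f0, f1). circle_fun f0 \<and> circle_fun f1}"

definition F0 :: "sfun set" where
  "F0 = {(f0, f1). circle_fun f0 \<and> f1 = (\<lambda>_. 0)}"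

definition F1 :: "sfun set" where
  "F1 = {(f0, f1). f0 = (\<lambda>_. 0) \<and> circle_fun f1}"

definition sadd :: "sfun \<Rightarrow> sfun \<Rightarrow> sfun" where
  "sadd f g = (\<lambda>x. fst f x + fst g x, \<lambda>x. snd f x + snd g x)"

definition sscale :: "complex \<Rightarrow> sfun \<Rightarrow> sfun" where
  "sscale c f = (\<lambda>x. c * fst f x, \<lambda>x. c * snd f x)"

text \<open>Product: (f0 + xi f1)(g0 + xi g1) = f0 g0 + xi (f0 g1 + f1 g0), as xi^2 = 0.\<close>
definition smult :: "sfun \<Rightarrow> sfun \<Rightarrow> sfun" where
  "smult f g = (\<lambda>x. fst f x * fst g x, \<lambda>x. fst f x * snd g x + snd f x * fst g x)"

text \<open>Dbar = d/dxi - xi d/dx, so Dbar (f0 + xi f1) = f1 - xi f0'.\<close>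
definition Dbar :: "sfun \<Rightarrow> sfun" where
  "Dbar f = (snd f, \<lambda>x. - vderiv (fst f) x)"

definition even_part :: "sfun \<Rightarrow> sfun" where
  "even_part f = (fst f, \<lambda>_. 0)"

definition odd_part :: "sfun \<Rightarrow> sfun" where
  "odd_part f = (\<lambda>_. 0, snd f)"

text \<open>The bracket (f,g) = -1/2 Dbar(f) g + 1/2 (-1)^sigma(f) f Dbar(g) on pure-parity f,
  extended bilinearly (linearity in g is automatic).\<close>
definition sbr :: "sfun \<Rightarrow> sfun \<Rightarrow> sfun" where
  "sbr f g =
     sadd
      (sadd (sscale (-1/2) (smult (Dbar (even_part f)) g))
            (sscale (1/2) (smult (even_part f) (Dbar g))))
      (sadd (sscale (-1/2) (smult (Dbar (odd_part f)) g))
            (sscale (-1/2) (smult (odd_part f) (Dbar g))))"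

definition rho :: "sfun \<Rightarrow> sfun \<Rightarrow> sfun" where
  "rho \<psi> v = sbr \<psi> v"

end

theory Submission
  imports Defs
begin

text \<open>On pure-parity arguments the bracket has explicit closed forms: writing even elements as
  functions f and odd ones as \<open>\<xi>a\<close>, one gets \<open>(\<xi>a, \<xi>b) = -\<xi>ab\<close>, \<open>\<rho>\<^sub>\<xi>\<^sub>b f = -bf/2\<close> and
  \<open>(f, g) = \<xi>(f'g - fg')/2\<close>. Every identity of the proposition then becomes a pointwise
  polynomial identity in the coefficient functions and their first derivatives. The only
  analysis needed is that smooth \<open>2\<pi>\<close>-periodic functions are closed under sums, products and
  differentiation, together with the product rule.\<close>

lemma smooth_fun_differentiable: "smooth_fun f \<Longrightarrow> f differentiable at x"
  unfolding smooth_fun_def by (metis funpow_0)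

lemma smooth_fun_vderiv: "smooth_fun f \<Longrightarrow> smooth_fun (vderiv f)"
  unfolding smooth_fun_def by (metis funpow_Suc_right comp_apply)

lemma vderiv_add:
  "(\<And>x. f differentiable at x) \<Longrightarrow> (\<And>x. g differentiable at x) \<Longrightarrow>
   vderiv (\<lambda>x. f x + g x) = (\<lambda>x. vderiv f x + vderiv g x)"
  unfolding vderiv_def by (rule ext) simp

lemma vderiv_mult:
  "(\<And>x. f differentiable at x) \<Longrightarrow> (\<And>x. g differentiable at x) \<Longrightarrow>
   vderiv (\<lambda>x. f x * g x) = (\<lambda>x. f x * vderiv g x + vderiv f x * g x)"
  unfolding vderiv_def by (rule ext) simp

lemma vderiv_const: "vderiv (\<lambda>x. c) = (\<lambda>x. 0)"
  unfolding vderiv_def by simp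

lemma vderiv_cmult:
  "(\<And>x. f differentiable at x) \<Longrightarrow> vderiv (\<lambda>x. c * f x) = (\<lambda>x. c * vderiv f x)"
  using vderiv_mult[of "\<lambda>_. c" f] by (simp add: vderiv_const)

lemma funpow_vderiv_add:
  assumes "\<forall>k<n. \<forall>x. (vderiv ^^ k) f differentiable at x"
    and "\<forall>k<n. \<forall>x. (vderiv ^^ k) g differentiable at x"
  shows "(vderiv ^^ n) (\<lambda>x. f x + g x) = (\<lambda>x. (vderiv ^^ n) f x + (vderiv ^^ n) g x)"
  using assms
proof (induction n arbitrary: f g)
  case 0
  then show ?case by simp
next
  case (Suc n)
  have "\<And>x. f differentiable at x" "\<And>x. g differentiable at x"
    using Suc.prems by (metis funpow_0 zero_less_Suc)+
  then have "(vderiv ^^ Suc n) (\<lambda>x. f x + g x) = (vderiv ^^ n) (\<lambda>x. vderiv f x + vderiv g x)"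
    by (simp only: funpow_Suc_right comp_apply vderiv_add)
  also have "\<dots> = (\<lambda>x. (vderiv ^^ n) (vderiv f) x + (vderiv ^^ n) (vderiv g) x)"
    by (rule Suc.IH) (use Suc.prems in \<open>metis Suc_mono funpow_Suc_right comp_apply\<close>)+
  finally show ?case
    by (simp only: funpow_Suc_right comp_apply)
qed

lemma smooth_fun_add: "smooth_fun f \<Longrightarrow> smooth_fun g \<Longrightarrow> smooth_fun (\<lambda>x. f x + g x)"
  unfolding smooth_fun_def by (subst funpow_vderiv_add) auto

lemma funpow_vderiv_mult_differentiable:
  "smooth_fun f \<Longrightarrow> smooth_fun g \<Longrightarrow> (vderiv ^^ n) (\<lambda>x. f x * g x) differentiable at x"
proof (induction n arbitrary: f g x rule: less_induct)
  case (less n)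
  show ?case
  proof (cases n)
    case 0
    then show ?thesis
      using less.prems by (simp add: smooth_fun_differentiable)
  next
    case (Suc m)
    have f: "\<And>x. f differentiable at x" and g: "\<And>x. g differentiable at x"
      using less.prems by (simp_all add: smooth_fun_differentiable)
    have IH1: "(vderiv ^^ k) (\<lambda>x. f x * vderiv g x) differentiable at x" if "k \<le> m" for k x
      using less.IH[of k] that Suc less.prems by (simp add: smooth_fun_vderiv)
    have IH2: "(vderiv ^^ k) (\<lambda>x. vderiv f x * g x) differentiable at x" if "k \<le> m" for k x
      using less.IH[of k] that Suc less.prems by (simp add: smooth_fun_vderiv)
    have "(vderiv ^^ n) (\<lambda>x. f x * g x)
          = (vderiv ^^ m) (\<lambda>x. f x * vderiv g x + vderiv f x * g x)"
      by (simp only: Suc funpow_Suc_right comp_apply vderiv_mult[OF f g])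
    also have "\<dots> = (\<lambda>x. (vderiv ^^ m) (\<lambda>x. f x * vderiv g x) x
                        + (vderiv ^^ m) (\<lambda>x. vderiv f x * g x) x)"
      by (rule funpow_vderiv_add) (simp_all add: IH1 IH2)
    finally show ?thesis
      by (simp add: IH1 IH2)
  qed
qed

lemma smooth_fun_mult: "smooth_fun f \<Longrightarrow> smooth_fun g \<Longrightarrow> smooth_fun (\<lambda>x. f x * g x)"
  unfolding smooth_fun_def
  using funpow_vderiv_mult_differentiable[unfolded smooth_fun_def] by blast

lemma funpow_vderiv_const_differentiable: "(vderiv ^^ n) (\<lambda>x. c) differentiable at x"
proof (induction n arbitrary: c)
  case 0
  then show ?case by simp
next
  case (Suc n)
  then show ?case
    by (simp only: funpow_Suc_right comp_apply vderiv_const)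
qed

lemma smooth_fun_const: "smooth_fun (\<lambda>x. c)"
  unfolding smooth_fun_def by (simp add: funpow_vderiv_const_differentiable)

lemma vderiv_periodic:
  assumes periodic: "\<And>x. f (x + 2 * pi) = f x" and diff: "\<And>x. f differentiable at x"
  shows "vderiv f (x + 2 * pi) = vderiv f x"
proof -
  have shift: "f = f \<circ> (\<lambda>y. y + 2 * pi)"
    using periodic by (auto simp: fun_eq_iff)
  have shift_deriv: "((\<lambda>y. y + 2 * pi) has_vector_derivative 1) (at x)"
    by (auto intro!: derivative_eq_intros)
  have "vector_derivative (f \<circ> (\<lambda>y. y + 2 * pi)) (at x)
        = vector_derivative (\<lambda>y. y + 2 * pi) (at x) *\<^sub>R vector_derivative f (at (x + 2 * pi))"
    by (rule vector_derivative_chain_at)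
      (use shift_deriv diff in \<open>auto simp: differentiable_def has_vector_derivative_def\<close>)
  also have "vector_derivative (\<lambda>y. y + 2 * pi) (at x) = 1"
    using shift_deriv vector_derivative_at by blast
  finally show ?thesis
    unfolding vderiv_def using shift by simp
qed

lemma circle_fun_differentiable: "circle_fun f \<Longrightarrow> f differentiable at x"
  unfolding circle_fun_def using smooth_fun_differentiable by auto

lemma circle_fun_vderiv: "circle_fun f \<Longrightarrow> circle_fun (vderiv f)"
  unfolding circle_fun_def using smooth_fun_vderiv vderiv_periodic smooth_fun_differentiable
  by metis

lemma circle_fun_add: "circle_fun f \<Longrightarrow> circle_fun g \<Longrightarrow> circle_fun (\<lambda>x. f x + g x)"
  unfolding circle_fun_def using smooth_fun_add by auto

lemma circle_fun_mult: "circle_fun f \<Longrightarrow> circle_fun g \<Longrightarrow> circle_fun (\<lambda>x. f x * g x)"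
  unfolding circle_fun_def using smooth_fun_mult by auto

lemma circle_fun_cmult: "circle_fun f \<Longrightarrow> circle_fun (\<lambda>x. c * f x)"
  unfolding circle_fun_def using smooth_fun_mult[OF smooth_fun_const] by auto

lemma circle_fun_uminus: "circle_fun f \<Longrightarrow> circle_fun (\<lambda>x. - f x)"
  using circle_fun_cmult[of f "-1"] by simp

lemma circle_fun_divide: "circle_fun f \<Longrightarrow> circle_fun (\<lambda>x. f x / c)"
  using circle_fun_cmult[of f "inverse c"] by (simp add: divide_inverse_commute)

lemma circle_fun_diff: "circle_fun f \<Longrightarrow> circle_fun g \<Longrightarrow> circle_fun (\<lambda>x. f x - g x)"
  using circle_fun_add[of f "\<lambda>x. - g x"] circle_fun_uminus[of g] by simp

lemma F0E: "v \<in> F0 \<Longrightarrow> (\<And>f. v = (f, \<lambda>_. 0) \<Longrightarrow> circle_fun f \<Longrightarrow> P) \<Longrightarrow> P"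
  unfolding F0_def by auto

lemma F1E: "\<phi> \<in> F1 \<Longrightarrow> (\<And>a. \<phi> = (\<lambda>_. 0, a) \<Longrightarrow> circle_fun a \<Longrightarrow> P) \<Longrightarrow> P"
  unfolding F1_def by auto

lemma sbr_odd_left:
  "sbr (\<lambda>_. 0, a) g = (\<lambda>x. - (1/2) * (a x * fst g x), \<lambda>x. - (a x * snd g x))"
  by (simp add: sbr_def sadd_def sscale_def smult_def Dbar_def even_part_def odd_part_def
      vderiv_const fun_eq_iff algebra_simps)

lemma sbr_even_left:
  "sbr (f, \<lambda>_. 0) g =
     (\<lambda>x. (1/2) * (f x * snd g x), \<lambda>x. (1/2) * (vderiv f x * fst g x - f x * vderiv (fst g) x))"
  by (simp add: sbr_def sadd_def sscale_def smult_def Dbar_def even_part_def odd_part_def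
      vderiv_const fun_eq_iff algebra_simps)

lemma sbr_odd_odd: "sbr (\<lambda>_. 0, a) (\<lambda>_. 0, b) = (\<lambda>_. 0, \<lambda>x. - (a x * b x))"
  by (simp add: sbr_odd_left fun_eq_iff)

lemma rho_odd_even: "rho (\<lambda>_. 0, b) (f, \<lambda>_. 0) = (\<lambda>x. - (1/2) * (b x * f x), \<lambda>_. 0)"
  by (simp add: rho_def sbr_odd_left fun_eq_iff)

lemma sbr_even_even:
  "sbr (f, \<lambda>_. 0) (g, \<lambda>_. 0) = (\<lambda>_. 0, \<lambda>x. (1/2) * (vderiv f x * g x - f x * vderiv g x))"
  by (simp add: sbr_even_left fun_eq_iff)

lemma sbr_odd_odd_in_F1: "\<phi> \<in> F1 \<Longrightarrow> \<psi> \<in> F1 \<Longrightarrow> sbr \<phi> \<psi> \<in> F1"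
  by (auto elim!: F1E simp: F1_def sbr_odd_odd circle_fun_uminus circle_fun_mult)

lemma sbr_odd_odd_commute: "\<phi> \<in> F1 \<Longrightarrow> \<psi> \<in> F1 \<Longrightarrow> sbr \<phi> \<psi> = sbr \<psi> \<phi>"
  by (auto elim!: F1E simp: sbr_odd_odd mult.commute)

lemma sbr_odd_odd_assoc:
  "\<phi> \<in> F1 \<Longrightarrow> \<psi> \<in> F1 \<Longrightarrow> \<theta> \<in> F1 \<Longrightarrow> sbr (sbr \<phi> \<psi>) \<theta> = sbr \<phi> (sbr \<psi> \<theta>)"
  by (auto elim!: F1E simp: sbr_odd_odd mult.assoc)

lemma rho_odd_even_in_F0: "\<psi> \<in> F1 \<Longrightarrow> v \<in> F0 \<Longrightarrow> rho \<psi> v \<in> F0"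
  by (auto elim!: F1E F0E simp: F0_def rho_odd_even circle_fun_uminus circle_fun_divide circle_fun_mult)

lemma rho_anticommutator:
  "\<phi> \<in> F1 \<Longrightarrow> \<psi> \<in> F1 \<Longrightarrow> v \<in> F0 \<Longrightarrow>
   sadd (rho \<phi> (rho \<psi> v)) (rho \<psi> (rho \<phi> v)) = rho (sbr \<phi> \<psi>) v"
  by (auto elim!: F1E F0E simp: sbr_odd_odd rho_odd_even sadd_def fun_eq_iff algebra_simps)

lemma sbr_even_even_in_F1: "v \<in> F0 \<Longrightarrow> w \<in> F0 \<Longrightarrow> sbr v w \<in> F1"
  by (auto elim!: F0E simp: F1_def sbr_even_even
      circle_fun_divide circle_fun_diff circle_fun_mult circle_fun_vderiv)

lemma sbr_even_even_antisym: "v \<in> F0 \<Longrightarrow> w \<in> F0 \<Longrightarrow> sbr v w = sscale (-1) (sbr w v)"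
  by (auto elim!: F0E simp: sbr_even_even sscale_def fun_eq_iff algebra_simps)

text \<open>The terms containing the derivative of the odd coefficient cancel.\<close>

lemma rho_derivation:
  assumes "\<psi> \<in> F1" "v \<in> F0" "w \<in> F0"
  shows "rho \<psi> (sbr v w) = sadd (sbr (rho \<psi> v) w) (sbr v (rho \<psi> w))"
proof -
  obtain b f g where \<psi>: "\<psi> = (\<lambda>_. 0, b)" and v: "v = (f, \<lambda>_. 0)" and w: "w = (g, \<lambda>_. 0)"
    and circle: "circle_fun b" "circle_fun f" "circle_fun g"
    using assms by (auto elim!: F1E F0E)
  have diff: "\<And>x. b differentiable at x" "\<And>x. f differentiable at x" "\<And>x. g differentiable at x"
    using circle by (simp_all add: circle_fun_differentiable)
  have deriv: "vderiv (\<lambda>x. - (1/2) * (b x * h x))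
                = (\<lambda>x. - (1/2) * (b x * vderiv h x + vderiv b x * h x))"
    if "\<And>x. h differentiable at x" for h
  proof -
    have "vderiv (\<lambda>x. - (1/2) * (b x * h x)) = (\<lambda>x. - (1/2) * vderiv (\<lambda>x. b x * h x) x)"
      by (rule vderiv_cmult) (simp add: diff that)
    then show ?thesis
      by (simp only: vderiv_mult[OF diff(1) that])
  qed
  show ?thesis
    unfolding \<psi> v w rho_odd_even sbr_even_even deriv[OF diff(2)] deriv[OF diff(3)]
    unfolding rho_def sbr_odd_odd sadd_def
    by (simp add: fun_eq_iff field_simps)
qed

lemma sbr_even_jacobi:
  "u \<in> F0 \<Longrightarrow> v \<in> F0 \<Longrightarrow> w \<in> F0 \<Longrightarrow>
   sadd (sadd (sbr u (sbr v w)) (sbr v (sbr w u))) (sbr w (sbr u v)) = (\<lambda>_. 0, \<lambda>_. 0)"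
  by (elim F0E) (simp add: sbr_even_left sadd_def vderiv_const fun_eq_iff algebra_simps)

theorem proposition2p3:
  shows
   "(\<forall>\<phi>\<in>F1. \<forall>\<psi>\<in>F1. sbr \<phi> \<psi> \<in> F1)
    \<and> (\<forall>\<phi>\<in>F1. \<forall>\<psi>\<in>F1. sbr \<phi> \<psi> = sbr \<psi> \<phi>)
    \<and> (\<forall>\<phi>\<in>F1. \<forall>\<psi>\<in>F1. \<forall>\<theta>\<in>F1. sbr (sbr \<phi> \<psi>) \<theta> = sbr \<phi> (sbr \<psi> \<theta>))
    \<and> (\<forall>\<psi>\<in>F1. \<forall>v\<in>F0. rho \<psi> v \<in> F0)
    \<and> (\<forall>\<phi>\<in>F1. \<forall>\<psi>\<in>F1. \<forall>v\<in>F0.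
          sadd (rho \<phi> (rho \<psi> v)) (rho \<psi> (rho \<phi> v)) = rho (sbr \<phi> \<psi>) v)
    \<and> (\<forall>v\<in>F0. \<forall>w\<in>F0. sbr v w \<in> F1)
    \<and> (\<forall>v\<in>F0. \<forall>w\<in>F0. sbr v w = sscale (-1) (sbr w v))
    \<and> (\<forall>\<psi>\<in>F1. \<forall>v\<in>F0. \<forall>w\<in>F0.
          rho \<psi> (sbr v w) = sadd (sbr (rho \<psi> v) w) (sbr v (rho \<psi> w)))
    \<and> (\<forall>u\<in>F0. \<forall>v\<in>F0. \<forall>w\<in>F0.
          sadd (sadd (sbr u (sbr v w)) (sbr v (sbr w u))) (sbr w (sbr u v))
            = (\<lambda>_. 0, \<lambda>_. 0))"
  by (intro conjI ballI sbr_odd_odd_in_F1 sbr_odd_odd_commute sbr_odd_odd_assoc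
      rho_odd_even_in_F0 rho_anticommutator sbr_even_even_in_F1 sbr_even_even_antisym
      rho_derivation sbr_even_jacobi)

end
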